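(* Consider the convex problem $\mathcal{P}_n$ described in the context, and let $(\mathbf{V}_0^\ast,\{\mathbf{V}_k^\ast\},\boldsymbol{\Lambda}^\ast,\dots,\omega^\ast)$ be an optimal solution together with optimal Lagrange multipliers satisfying the KKT conditions (K2), (K4), (K5) of the context with $\psi_4^{k\ast}>0$. If $\mathrm{rank}(\mathbf{V}_k^\ast)>1$ for some $k\in\mathcal{K}$, then there exists a rank-one positive semidefinite matrix $\hat{\mathbf{V}}_k$ with $\mathbf{V}_k^\ast-\hat{\mathbf{V}}_k\succeq 0$ such that the point obtained from the optimal solution by replacing $\mathbf{V}_k^\ast$ with $\hat{\mathbf{V}}_k$ and $\boldsymbol{\Lambda}^\ast$ with $\hat{\boldsymbol{\Lambda}}=\boldsymbol{\Lambda}^\ast+(\mathbf{V}_k^\ast-\hat{\mathbf{V}}_k)$ (keeping $\mathbf{V}_0^\ast$ and all other variables unchanged) is feasible for $\mathcal{P}_n$ and attains the same objective value; here $\mathbf{V}_k^\ast-\hat{\mathbf{V}}_k$ is a nonnegative combination of projections onto an orthonormal basis of the null space of $\mathbf{Y}_k^\ast$ (the matrix $\mathbf{Y}_k$ evaluated at the optimal multipliers).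
   Context: Setting. Let $N,L,K,Z$ be positive integers and write $\mathcal{L}=\{1,\dots,L\}$, $\mathcal{K}=\{1,\dots,K\}$, $\mathcal{Z}=\{1,\dots,Z\}$. Given are row vectors $\mathbf{g}_l\in\mathbb{C}^{1\times N}$ ($l\in\mathcal{L}$; fronthaul channels from an $N$-antenna central processor to $L$ base stations), $\bar{\mathbf{h}}_k\in\mathbb{C}^{1\times L}$ ($k\in\mathcal{K}$; equivalent user channels) and $\bar{\mathbf{h}}^{e}_z\in\mathbb{C}^{1\times L}$ ($z\in\mathcal{Z}$; equivalent eavesdropper channels). Set $\mathbf{G}_l=\mathbf{g}_l^H\mathbf{g}_l$, $\bar{\mathbf{H}}_k=\bar{\mathbf{h}}_k^H\bar{\mathbf{h}}_k$, $\bar{\mathbf{H}}^e_z=(\bar{\mathbf{h}}^e_z)^H\bar{\mathbf{h}}^e_z$. Given are positive constants $W_{mm},W_{mc},N_0,P^{BS}_{\max},P^{AC}_{\max}$, $\eta=W_{mc}/W_{mm}$, and iteration constants $\beta_k^{[n]}>0$, $\varepsilon_k^{[n]}>0$, $\lambda_k^{[n]}\in\mathbb{R}$, $\tau_k^{[n]}>-1$ ($k\in\mathcal{K}$), $\mu_k^{z[n]}\in\mathbb{R}$, $\gamma_k^{z[n]}>-1$ ($k\in\mathcal{K},z\in\mathcal{Z}$). All logarithms are natural. Problem $\mathcal{P}_n$ (the rank-relaxed convex subproblem at iteration $n$). Variables: Hermitian $\mathbf{V}_0\in\mathbb{C}^{N\times N}$, Hermitian $\mathbf{V}_k\in\mathbb{C}^{L\times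 L}$ ($k\in\mathcal{K}$), Hermitian $\boldsymbol{\Lambda}\in\mathbb{C}^{L\times L}$, and real scalars $\varepsilon_k,\beta_k,\tau_k,\theta_k,\lambda_k$ ($k\in\mathcal{K}$), $\gamma_k^z,\zeta_k^z,\mu_k^z$ ($k\in\mathcal{K},z\in\mathcal{Z}$), $\omega$. Objective (to maximize): $\sum_{k=1}^K W_{mm}\big[\log(1+\beta_k)-\log(1+\gamma_k^{z[n]})-\frac{\gamma_k^z-\gamma_k^{z[n]}}{1+\gamma_k^{z[n]}}\big]$, which depends only on the scalar variables $\beta_k,\gamma_k^z$. Constraints, for all $k\in\mathcal{K}$, $z\in\mathcal{Z}$, $l\in\mathcal{L}$: (C1) $\sum_{k=1}^K\mathrm{Tr}(\mathbf{V}_k)+\mathrm{Tr}(\boldsymbol{\Lambda})\le P^{BS}_{\max}$; (C2) $\mathrm{Tr}(\mathbf{V}_0)\le P^{AC}_{\max}$; (C3) $\mathbf{V}_0\succeq 0$, $\mathbf{V}_k\succeq 0$, $\boldsymbol{\Lambda}\succeq 0$; (C4) $\varepsilon_k\ge\sum_{i\ne k}\mathrm{Tr}(\bar{\mathbf{H}}_k\mathbf{V}_i)+\mathrm{Tr}(\bar{\mathbf{H}}_k\boldsymbol{\Lambda})+W_{mm}N_0$; (C5) $\frac{\beta_k^{[n]}}{2\varepsilon_k^{[n]}}\varepsilon_k^2+\frac{\varepsilon_k^{[n]}}{2\beta_k^{[n]}}\beta_k^2\le\mathrm{Tr}(\bar{\mathbf{H}}_k\mathbf{V}_k)$; (C6)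 $\mathrm{Tr}(\bar{\mathbf{H}}^e_z\mathbf{V}_k)-\gamma_k^zW_{mm}N_0\le\zeta_k^z$; (C7) $\zeta_k^z\le 2\mu_k^{z[n]}\mu_k^z-(\mu_k^{z[n]})^2$; (C8) $\begin{bmatrix}\gamma_k^z&\mu_k^z\\ \mu_k^z&\sum_{i\ne k}\mathrm{Tr}(\bar{\mathbf{H}}^e_z\mathbf{V}_i)+\mathrm{Tr}(\bar{\mathbf{H}}^e_z\boldsymbol{\Lambda})\end{bmatrix}\succeq 0$; (C9) $\mathrm{Tr}(\mathbf{G}_l\mathbf{V}_0)\ge W_{mc}N_0(e^{\omega/\eta}-1)$ (equivalently $\omega\le\eta\log(1+\mathrm{Tr}(\mathbf{G}_l\mathbf{V}_0)/(W_{mc}N_0))$); (C10) $\mathrm{Tr}(\bar{\mathbf{H}}_k\mathbf{V}_k)-\tau_kW_{mm}N_0\le\theta_k$; (C11) $\theta_k\le 2\lambda_k^{[n]}\lambda_k-(\lambda_k^{[n]})^2$; (C12) $\begin{bmatrix}\tau_k&\lambda_k\\ \lambda_k&\sum_{i\ne k}\mathrm{Tr}(\bar{\mathbf{H}}_k\mathbf{V}_i)+\mathrm{Tr}(\bar{\mathbf{H}}_k\boldsymbol{\Lambda})\end{bmatrix}\succeq 0$; (C13) $\omega\ge\sum_{k=1}^K\big[\log(1+\tau_k^{[n]})+\frac{\tau_k-\tau_k^{[n]}}{1+\tau_k^{[n]}}\big]$. No rank constraint is imposed (SDP relaxation). Lagrange multipliers and KKT conditions. Associate nonnegative multipliers $\psi_1$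 with (C1), $\psi_2$ with (C2), $\psi_3^k$ with (C4), $\psi_4^k$ with (C5), $\psi_5^{z,k}$ with (C6), $\psi_7^k$ with (C10), $\psi_9^l$ with (C9), positive semidefinite matrices $\boldsymbol{\Omega}_k$ with $\mathbf{V}_k\succeq 0$ ($k=0,\dots,K$), and, following the paper, nonnegative scalars $\psi_6^{z,k}$ and $\psi_8^k$ accounting for (C8) and (C12) through Lagrangian terms $\psi_6^{z,k}\big(\sum_{i\ne k}\mathrm{Tr}(\bar{\mathbf{H}}^e_z\mathbf{V}_i)+\mathrm{Tr}(\bar{\mathbf{H}}^e_z\boldsymbol{\Lambda})\big)$ and $\psi_8^k\big(\sum_{i\ne k}\mathrm{Tr}(\bar{\mathbf{H}}_k\mathbf{V}_i)+\mathrm{Tr}(\bar{\mathbf{H}}_k\boldsymbol{\Lambda})\big)$. For $k\in\mathcal{K}$ define $\mathbf{Y}_k=\psi_1\mathbf{I}+\sum_{i\ne k}(\psi_3^i-\psi_8^i)\bar{\mathbf{H}}_i+\sum_{z=1}^Z\big(\psi_5^{z,k}-\sum_{i\ne k}\psi_6^{z,i}\big)\bar{\mathbf{H}}^e_z+\psi_7^k\bar{\mathbf{H}}_k$. "Optimal Lagrange multipliers" are multipliers which, together with an optimal solution of $\mathcal{P}_n$, satisfy the KKT conditions, in particular: (K1) $\boldsymbol{\Omega}_0=\psi_2\mathbf{I}-\sum_{l=1}^L\psi_9^l\mathbf{G}_l$; (K2) $\boldsymbol{\Omega}_k=\mathbf{Y}_k-\psi_4^k\bar{\mathbf{H}}_k$,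 $k\in\mathcal{K}$; (K3) $\psi_9^l\big(\mathrm{Tr}(\mathbf{G}_l\mathbf{V}_0)-W_{mc}N_0(e^{\omega/\eta}-1)\big)=0$, $l\in\mathcal{L}$; (K4) $\boldsymbol{\Omega}_k\mathbf{V}_k=\mathbf{0}$, $k=0,\dots,K$; (K5) $\boldsymbol{\Omega}_k\succeq 0$, $k=0,\dots,K$. *)

theory Defs
  imports "HOL-Analysis.Analysis"
begin

definition herm :: "complex^'m^'m \<Rightarrow> bool" where
  "herm A \<longleftrightarrow> (\<chi> i j. cnj (A $ j $ i)) = A"

definition qform :: "complex^'m^'m \<Rightarrow> complex^'m \<Rightarrow> complex" where
  "qform A x = (\<Sum>i\<in>UNIV. \<Sum>j\<in>UNIV. cnj (x $ i) * A $ i $ j * x $ j)"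

definition psd :: "complex^'m^'m \<Rightarrow> bool" where
  "psd A \<longleftrightarrow> herm A \<and> (\<forall>x. 0 \<le> Re (qform A x))"

text \<open>For a row vector h, the matrix h^H h.\<close>
definition gramr :: "complex^'m \<Rightarrow> complex^'m^'m" where
  "gramr h = (\<chi> i j. cnj (h $ i) * h $ j)"

definition outer :: "complex^'m \<Rightarrow> complex^'m^'m" where
  "outer u = (\<chi> i j. u $ i * cnj (u $ j))"

definition cinner :: "complex^'m \<Rightarrow> complex^'m \<Rightarrow> complex" where
  "cinner u v = (\<Sum>i\<in>UNIV. cnj (u $ i) * v $ i)"

definition orthonormal_set :: "(complex^'m) set \<Rightarrow> bool" where
  "orthonormal_set U \<longleftrightarrow> (\<forall>u\<in>U. \<forall>v\<in>U. cinner u v = (if u = v then 1 else 0))"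

text \<open>Real part of Tr(A B) (for Hermitian A, B this trace is real).\<close>
definition rtr :: "complex^'m^'m \<Rightarrow> complex^'m^'m \<Rightarrow> real" where
  "rtr A B = Re (trace (A ** B))"

definition rtrace :: "complex^'m^'m \<Rightarrow> real" where
  "rtrace A = Re (trace A)"

definition mat2 :: "real \<Rightarrow> real \<Rightarrow> real \<Rightarrow> real \<Rightarrow> complex^2^2" where
  "mat2 a b c e = (\<chi> i j. complex_of_real
      (if i = 1 then (if j = 1 then a else b) else (if j = 1 then c else e)))"

text \<open>Users are indexed by 1..nK, eavesdroppers by 1..nZ, base stations by the finite
  type 'l, CP antennas by the finite type 'n.\<close>
record ('n, 'l) pdata =
  gf :: "'l \<Rightarrow> complex^'n"
  hb :: "nat \<Rightarrow> complex^'l"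
  he :: "nat \<Rightarrow> complex^'l"
  nK :: nat
  nZ :: nat
  Wmm :: real
  Wmc :: real
  N0 :: real
  PBS :: real
  PAC :: real
  beta_n :: "nat \<Rightarrow> real"
  eps_n :: "nat \<Rightarrow> real"
  lam_n :: "nat \<Rightarrow> real"
  tau_n :: "nat \<Rightarrow> real"
  mu_n :: "nat \<Rightarrow> nat \<Rightarrow> real"   \<comment> \<open>mu_n k z = mu_k^{z[n]}\<close>
  gam_n :: "nat \<Rightarrow> nat \<Rightarrow> real"  \<comment> \<open>gam_n k z = gamma_k^{z[n]}\<close>

record ('n, 'l) point =
  V0 :: "complex^'n^'n"
  Vk :: "nat \<Rightarrow> complex^'l^'l"
  Lam :: "complex^'l^'l"
  eps :: "nat \<Rightarrow> real"
  beta :: "nat \<Rightarrow> real"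
  tau :: "nat \<Rightarrow> real"
  theta :: "nat \<Rightarrow> real"
  lam :: "nat \<Rightarrow> real"
  gam :: "nat \<Rightarrow> nat \<Rightarrow> real"   \<comment> \<open>gam k z = gamma_k^z\<close>
  zeta :: "nat \<Rightarrow> nat \<Rightarrow> real"
  mu :: "nat \<Rightarrow> nat \<Rightarrow> real"
  om :: real

definition Kset :: "('n::finite, 'l::finite) pdata \<Rightarrow> nat set" where
  "Kset d = {1..nK d}"

definition Zset :: "('n::finite, 'l::finite) pdata \<Rightarrow> nat set" where
  "Zset d = {1..nZ d}"

definition eta :: "('n::finite, 'l::finite) pdata \<Rightarrow> real" where
  "eta d = Wmc d / Wmm d"

definition data_ok :: "('n::finite, 'l::finite) pdata \<Rightarrow> bool" where
  "data_ok d \<longleftrightarrow> nK d > 0 \<and> nZ d > 0 \<and> Wmm d > 0 \<and> Wmc d > 0 \<and> N0 d > 0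
     \<and> PBS d > 0 \<and> PAC d > 0
     \<and> (\<forall>k\<in>Kset d. beta_n d k > 0 \<and> eps_n d k > 0 \<and> tau_n d k > -1)
     \<and> (\<forall>k\<in>Kset d. \<forall>z\<in>Zset d. gam_n d k z > -1)"

definition interf :: "('n::finite, 'l::finite) pdata \<Rightarrow> ('n, 'l) point \<Rightarrow> nat \<Rightarrow> real" where
  "interf d s k = (\<Sum>i\<in>Kset d - {k}. rtr (gramr (hb d k)) (Vk s i)) + rtr (gramr (hb d k)) (Lam s)"

definition einterf :: "('n::finite, 'l::finite) pdata \<Rightarrow> ('n, 'l) point \<Rightarrow> nat \<Rightarrow> nat \<Rightarrow> real" where
  "einterf d s k z = (\<Sum>i\<in>Kset d - {k}. rtr (gramr (he d z)) (Vk s i)) + rtr (gramr (he d z)) (Lam s)"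

definition feasible :: "('n::finite, 'l::finite) pdata \<Rightarrow> ('n, 'l) point \<Rightarrow> bool" where
  "feasible d s \<longleftrightarrow>
     herm (V0 s) \<and> (\<forall>k\<in>Kset d. herm (Vk s k)) \<and> herm (Lam s)
   \<comment> \<open>C1\<close>
   \<and> (\<Sum>k\<in>Kset d. rtrace (Vk s k)) + rtrace (Lam s) \<le> PBS d
   \<comment> \<open>C2\<close>
   \<and> rtrace (V0 s) \<le> PAC d
   \<comment> \<open>C3\<close>
   \<and> psd (V0 s) \<and> (\<forall>k\<in>Kset d. psd (Vk s k)) \<and> psd (Lam s)
   \<and> (\<forall>k\<in>Kset d.
        \<comment> \<open>C4\<close>
        eps s k \<ge> interf d s k + Wmm d * N0 d
        \<comment> \<open>C5\<close>
      \<and> beta_n d k / (2 * eps_n d k) * (eps s k)\<^sup>2 + eps_n d k / (2 * beta_n d k) * (beta s k)\<^sup>2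
          \<le> rtr (gramr (hb d k)) (Vk s k)
        \<comment> \<open>C10\<close>
      \<and> rtr (gramr (hb d k)) (Vk s k) - tau s k * Wmm d * N0 d \<le> theta s k
        \<comment> \<open>C11\<close>
      \<and> theta s k \<le> 2 * lam_n d k * lam s k - (lam_n d k)\<^sup>2
        \<comment> \<open>C12\<close>
      \<and> psd (mat2 (tau s k) (lam s k) (lam s k) (interf d s k))
      \<and> (\<forall>z\<in>Zset d.
          \<comment> \<open>C6\<close>
          rtr (gramr (he d z)) (Vk s k) - gam s k z * Wmm d * N0 d \<le> zeta s k z
          \<comment> \<open>C7\<close>
        \<and> zeta s k z \<le> 2 * mu_n d k z * mu s k z - (mu_n d k z)\<^sup>2
          \<comment> \<open>C8\<close>
        \<and> psd (mat2 (gam s k z) (mu s k z) (mu s k z) (einterf d s k z))))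
   \<comment> \<open>C9\<close>
   \<and> (\<forall>l. rtr (gramr (gf d l)) (V0 s) \<ge> Wmc d * N0 d * (exp (om s / eta d) - 1))
   \<comment> \<open>C13\<close>
   \<and> om s \<ge> (\<Sum>k\<in>Kset d. ln (1 + tau_n d k) + (tau s k - tau_n d k) / (1 + tau_n d k))"

text \<open>Objective; the eavesdropper index z appears free in the paper's objective and is
  a parameter here.\<close>
definition obj :: "('n::finite, 'l::finite) pdata \<Rightarrow> nat \<Rightarrow> ('n, 'l) point \<Rightarrow> real" where
  "obj d z s = (\<Sum>k\<in>Kset d. Wmm d * (ln (1 + beta s k) - ln (1 + gam_n d k z)
                    - (gam s k z - gam_n d k z) / (1 + gam_n d k z)))"

definition optimal :: "('n::finite, 'l::finite) pdata \<Rightarrow> nat \<Rightarrow> ('n, 'l) point \<Rightarrow> bool" where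
  "optimal d z s \<longleftrightarrow> feasible d s \<and> (\<forall>s'. feasible d s' \<longrightarrow> obj d z s' \<le> obj d z s)"

text \<open>The matrix Y_k (multipliers psi5, psi6 indexed as psi z k).\<close>
definition Ymat :: "('n::finite, 'l::finite) pdata \<Rightarrow> real \<Rightarrow> (nat \<Rightarrow> real) \<Rightarrow>
    (nat \<Rightarrow> nat \<Rightarrow> real) \<Rightarrow> (nat \<Rightarrow> nat \<Rightarrow> real) \<Rightarrow> (nat \<Rightarrow> real) \<Rightarrow> (nat \<Rightarrow> real) \<Rightarrow>
    nat \<Rightarrow> complex^'l^'l" where
  "Ymat d psi1 psi3 psi5 psi6 psi7 psi8 k =
     psi1 *\<^sub>R mat 1
   + (\<Sum>i\<in>Kset d - {k}. (psi3 i - psi8 i) *\<^sub>R gramr (hb d i))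
   + (\<Sum>z\<in>Zset d. (psi5 z k - (\<Sum>i\<in>Kset d - {k}. psi6 z i)) *\<^sub>R gramr (he d z))
   + psi7 k *\<^sub>R gramr (hb d k)"

end

theory Submission imports Defs begin

text \<open>
  Write \<open>a\<close> for the conjugate transpose of the user channel \<open>h\<^sub>k\<close>.  By (K2)
  \<open>Y\<^sub>k = \<Omega>\<^sub>k + \<psi>\<^sub>4 a a\<^sup>H\<close> with \<open>\<Omega>\<^sub>k \<succeq> 0\<close> and \<open>\<psi>\<^sub>4 > 0\<close>, so the kernel of
  \<open>Y\<^sub>k\<close> is \<open>{x. \<Omega>\<^sub>k x = 0, a\<^sup>H x = 0}\<close>, and by (K4) the range of \<open>V\<^sub>k\<close> lies in the
  kernel of \<open>\<Omega>\<^sub>k\<close>.  Hence a rank-one \<open>V\<^sub>h \<preceq> V\<^sub>k\<close> can be split off so that the range of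
  \<open>V\<^sub>k - V\<^sub>h\<close> lies in the kernel of \<open>Y\<^sub>k\<close>: if \<open>a\<^sup>H V\<^sub>k a > 0\<close>, the deflation
  \<open>V\<^sub>h = V\<^sub>k a a\<^sup>H V\<^sub>k / a\<^sup>H V\<^sub>k a\<close>; otherwise \<open>V\<^sub>k a = 0\<close> and any spectral component
  of \<open>V\<^sub>k\<close> will do.  Then \<open>a\<^sup>H (V\<^sub>k - V\<^sub>h) a = 0\<close>, so moving \<open>V\<^sub>k - V\<^sub>h\<close> into the
  artificial noise \<open>\<Lambda>\<close> keeps the signal and the interference at every user and the total
  power, can only increase what the eavesdroppers must overcome, and leaves the objective
  untouched.  The spectral theorem applied to \<open>V\<^sub>k - V\<^sub>h\<close> on the kernel of \<open>Y\<^sub>k\<close> gives the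
  orthonormal basis.
\<close>

section \<open>Complex inner product and Hermitian matrices\<close>

definition vcnj :: "complex^'m \<Rightarrow> complex^'m" where
  "vcnj h = (\<chi> i. cnj (h $ i))"

lemma gramr_eq_outer: "gramr h = outer (vcnj h)"
  by (simp add: vec_eq_iff gramr_def outer_def vcnj_def)

lemma cinner_add_left: "cinner (x + y) z = cinner x z + cinner y z"
  unfolding cinner_def by (simp add: distrib_right sum.distrib)

lemma cinner_add_right: "cinner x (y + z) = cinner x y + cinner x z"
  unfolding cinner_def by (simp add: distrib_left sum.distrib)

lemma cinner_diff_left: "cinner (x - y) z = cinner x z - cinner y z"
  unfolding cinner_def by (simp add: left_diff_distrib sum_subtractf)

lemma cinner_diff_right: "cinner x (y - z) = cinner x y - cinner x z"
  unfolding cinner_def by (simp add: right_diff_distrib sum_subtractf)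

lemma cinner_scale_left: "cinner (a *s x) y = cnj a * cinner x y"
  unfolding cinner_def by (simp add: sum_distrib_left algebra_simps)

lemma cinner_scale_right: "cinner x (a *s y) = a * cinner x y"
  unfolding cinner_def by (simp add: sum_distrib_left algebra_simps)

lemma cinner_zero_left [simp]: "cinner 0 x = 0"
  unfolding cinner_def by simp

lemma cinner_zero_right [simp]: "cinner x 0 = 0"
  unfolding cinner_def by simp

lemma cinner_sum_right: "finite U \<Longrightarrow> cinner x (\<Sum>u\<in>U. f u) = (\<Sum>u\<in>U. cinner x (f u))"
  by (induction U rule: finite_induct) (simp_all add: cinner_add_right)

lemma cinner_commute: "cinner y x = cnj (cinner x y)"
  unfolding cinner_def by (simp add: mult.commute)

lemma cinner_mult_commute_norm: "cinner x y * cinner y x = of_real ((cmod (cinner x y))\<^sup>2)"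
  by (subst cinner_commute[of y x]) (simp add: complex_norm_square del: of_real_power)

lemma cinner_self: "cinner x x = of_real ((norm x)\<^sup>2)"
proof -
  have "cinner x x = (\<Sum>i\<in>UNIV. of_real ((norm (x $ i))\<^sup>2))"
    unfolding cinner_def
    by (rule sum.cong) (simp_all add: complex_norm_square mult.commute del: of_real_power)
  also have "\<dots> = of_real (\<Sum>i\<in>UNIV. (norm (x $ i))\<^sup>2)" by simp
  also have "(\<Sum>i\<in>UNIV. (norm (x $ i))\<^sup>2) = (norm x)\<^sup>2"
    unfolding norm_vec_def L2_set_def by (simp add: sum_nonneg)
  finally show ?thesis .
qed

lemma cinner_self_eq_0 [simp]: "cinner x x = 0 \<longleftrightarrow> x = 0"
  by (simp add: cinner_self)

lemma cinner_span_orthogonal_eq_0: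
  assumes "v \<in> vec.span U" and "\<forall>u\<in>U. cinner u v = 0"
  shows "v = 0"
proof -
  have "vec.subspace {w. cinner w v = 0}"
    unfolding vec.subspace_def by (simp add: cinner_add_left cinner_scale_left)
  then have "cinner v v = 0"
    using vec.span_induct[OF assms(1), of "\<lambda>w. cinner w v = 0"] assms(2) by auto
  then show ?thesis by simp
qed

lemma orthonormal_setD:
  "orthonormal_set U \<Longrightarrow> u \<in> U \<Longrightarrow> v \<in> U \<Longrightarrow> cinner u v = (if u = v then 1 else 0)"
  unfolding orthonormal_set_def by blast

lemma orthonormal_set_insert:
  assumes "orthonormal_set U" and "cinner e e = 1" and "\<forall>u\<in>U. cinner e u = 0"
  shows "orthonormal_set (insert e U)"
proof -
  have "e \<notin> U" using assms(2,3) by auto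
  moreover have "\<forall>u\<in>U. cinner u e = 0" using assms(3) cinner_commute by (metis complex_cnj_zero)
  ultimately show ?thesis using assms unfolding orthonormal_set_def by auto
qed

lemma matrix_vector_mult_scaleR_left: "(c *\<^sub>R A) *v x = complex_of_real c *s (A *v (x::complex^'n))"
  by (simp add: vec_eq_iff matrix_vector_mult_def sum_distrib_left scaleR_conv_of_real[where 'a=complex] algebra_simps)

lemma matrix_vector_mult_sum_left:
  "finite U \<Longrightarrow> (\<Sum>u\<in>U. A u) *v (x::'a::comm_ring_1^'n) = (\<Sum>u\<in>U. A u *v x)"
  by (induction U rule: finite_induct) (simp_all add: matrix_vector_mult_add_rdistrib)

lemma matrix_vector_mult_sum_right:
  "finite U \<Longrightarrow> A *v (\<Sum>u\<in>U. f u) = (\<Sum>u\<in>U. A *v (f u :: 'a::comm_ring_1^'n))"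
  by (induction U rule: finite_induct) (simp_all add: matrix_vector_right_distrib)

lemma outer_mult_vector: "outer u *v x = cinner u x *s u"
  by (simp add: vec_eq_iff matrix_vector_mult_def outer_def cinner_def sum_distrib_left algebra_simps)

lemma herm_cnj: "herm A \<Longrightarrow> cnj (A $ i $ j) = A $ j $ i"
  unfolding herm_def by (metis vec_lambda_beta)

lemma herm_cinner: "herm A \<Longrightarrow> cinner x (A *v y) = cinner (A *v x) y"
proof -
  assume h: "herm A"
  have "cinner x (A *v y) = (\<Sum>i\<in>UNIV. \<Sum>j\<in>UNIV. cnj (x $ i) * A $ i $ j * y $ j)"
    unfolding cinner_def matrix_vector_mult_def by (simp add: sum_distrib_left mult.assoc)
  also have "\<dots> = (\<Sum>j\<in>UNIV. \<Sum>i\<in>UNIV. cnj (x $ i) * A $ i $ j * y $ j)"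
    by (rule sum.swap)
  also have "\<dots> = cinner (A *v x) y"
    unfolding cinner_def matrix_vector_mult_def
    by (simp add: sum_distrib_right sum_distrib_left herm_cnj[OF h] mult.commute mult.left_commute)
  finally show ?thesis .
qed

lemma herm_form_real: "herm A \<Longrightarrow> cinner x (A *v x) = of_real (Re (cinner x (A *v x)))"
  using herm_cinner[of A x x] cinner_commute[of "A *v x" x] by (simp add: complex_eq_iff)

lemma herm_add: "herm A \<Longrightarrow> herm B \<Longrightarrow> herm (A + B)"
  unfolding herm_def by (simp add: vec_eq_iff)

lemma herm_diff: "herm A \<Longrightarrow> herm B \<Longrightarrow> herm (A - B)"
  unfolding herm_def by (simp add: vec_eq_iff)

lemma herm_scaleR: "herm A \<Longrightarrow> herm (c *\<^sub>R A)"
  unfolding herm_def by (simp add: vec_eq_iff scaleR_conv_of_real[where 'a=complex])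

lemma herm_outer: "herm (outer u)"
  unfolding herm_def outer_def by (simp add: vec_eq_iff mult.commute)

lemma herm_mat_1: "herm (mat 1 :: complex^'n^'n)"
  by (simp add: herm_def vec_eq_iff mat_def)

lemma psd_iff_cinner: "psd A \<longleftrightarrow> herm A \<and> (\<forall>x. 0 \<le> Re (cinner x (A *v x)))"
  unfolding psd_def qform_def cinner_def matrix_vector_mult_def
  by (simp add: sum_distrib_left mult.assoc)

lemma psd_herm: "psd A \<Longrightarrow> herm A"
  unfolding psd_def by simp

lemma psd_zero: "psd (0 :: complex^'n^'n)"
  unfolding psd_iff_cinner herm_def by (simp add: vec_eq_iff)

lemma psd_add: "psd A \<Longrightarrow> psd B \<Longrightarrow> psd (A + B)"
  unfolding psd_iff_cinner by (simp add: herm_add matrix_vector_mult_add_rdistrib cinner_add_right)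

lemma psd_scaleR: "psd A \<Longrightarrow> c \<ge> 0 \<Longrightarrow> psd (c *\<^sub>R A)"
  unfolding psd_iff_cinner
  by (simp add: herm_scaleR matrix_vector_mult_scaleR_left cinner_scale_right)

lemma psd_sum: "finite U \<Longrightarrow> (\<And>u. u \<in> U \<Longrightarrow> psd (A u)) \<Longrightarrow> psd (\<Sum>u\<in>U. A u)"
  by (induction U rule: finite_induct) (simp_all add: psd_zero psd_add)

lemma psd_outer: "psd (outer u)"
  unfolding psd_iff_cinner
  by (simp add: herm_outer outer_mult_vector cinner_scale_right cinner_mult_commute_norm)

section \<open>Spectral theorem for Hermitian matrices\<close>

lemma quadratic_nonneg_imp_linear_coeff_zero:
  fixes n q :: real
  assumes "\<And>t. 0 \<le> 2 * t * n + t\<^sup>2 * q"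
  shows "n = 0"
proof -
  define a where "a = \<bar>q\<bar> + 1"
  have a: "a > 0" "q < 2 * a" unfolding a_def by auto
  have "0 \<le> 2 * (-n / a) * n + (-n / a)\<^sup>2 * q" by (rule assms)
  also have "\<dots> = n\<^sup>2 * (q - 2 * a) / a\<^sup>2"
    using a by (simp add: field_simps power2_eq_square)
  finally have "n\<^sup>2 * (q - 2 * a) \<ge> 0" using a by (simp add: zero_le_divide_iff)
  then show "n = 0" using a mult_pos_neg[of "n\<^sup>2" "q - 2 * a"] by fastforce
qed

text \<open>Along the line \<open>x + t A x\<close> the form is \<open>2 t |A x|\<^sup>2 + O(t\<^sup>2)\<close>.\<close>
lemma herm_form_zero_imp_kernel:
  fixes A :: "complex^'n^'n"
  assumes h: "herm A" and S: "vec.subspace S" and inv: "\<forall>y\<in>S. A *v y \<in> S"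
    and nonneg: "\<forall>y\<in>S. 0 \<le> Re (cinner y (A *v y))"
    and x: "x \<in> S" and zero: "Re (cinner x (A *v x)) = 0"
  shows "A *v x = 0"
proof -
  define w where "w = A *v x"
  have "0 \<le> 2 * t * (norm w)\<^sup>2 + t\<^sup>2 * Re (cinner w (A *v w))" for t :: real
  proof -
    let ?y = "x + complex_of_real t *s w"
    have "?y \<in> S" using x inv S unfolding w_def by (simp add: vec.subspace_add vec.subspace_scale)
    then have "0 \<le> Re (cinner ?y (A *v ?y))" using nonneg by blast
    also have "cinner ?y (A *v ?y) = cinner x (A *v x) + of_real t * cinner x (A *v w)
        + of_real t * cinner w (A *v x) + (of_real t)\<^sup>2 * cinner w (A *v w)"
      by (simp add: matrix_vector_right_distrib vector_scalar_commute cinner_add_left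
          cinner_add_right cinner_scale_left cinner_scale_right power2_eq_square algebra_simps)
    also have "cinner x (A *v w) = cinner w w"
      using herm_cinner[OF h, of x w] unfolding w_def by simp
    finally show ?thesis using zero unfolding w_def
      by (simp add: cinner_self power2_eq_square algebra_simps)
  qed
  then have "(norm w)\<^sup>2 = 0" by (rule quadratic_nonneg_imp_linear_coeff_zero)
  then show ?thesis unfolding w_def by simp
qed

lemma psd_form_zero_imp_kernel: "psd A \<Longrightarrow> Re (cinner x (A *v x)) = 0 \<Longrightarrow> A *v x = 0"
  using herm_form_zero_imp_kernel[of A UNIV x] unfolding psd_iff_cinner by auto

lemma scaleR_eq_scalar_mult_of_real: "c *\<^sub>R (x::complex^'n) = complex_of_real c *s x"
  by (simp add: vec_eq_iff scaleR_conv_of_real[where 'a=complex])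

lemma vec_subspace_kernel: "vec.subspace {x. A *v x = (0::'a::field^'m)}"
  unfolding vec.subspace_def by (simp add: matrix_vector_right_distrib vector_scalar_commute)

lemma vec_subspace_closed:
  fixes S :: "(complex^'n) set"
  assumes "vec.subspace S"
  shows "closed S"
proof (rule closed_subspace)
  show "subspace S"
    using assms unfolding subspace_def vec.subspace_def by (simp add: scaleR_eq_scalar_mult_of_real)
qed

lemma cinner_scale_form: "cinner (c *s x) (M *v (c *s x)) = (cmod c)\<^sup>2 * cinner x (M *v x)"
  by (simp add: vector_scalar_commute cinner_scale_left cinner_scale_right complex_norm_square
      del: of_real_power)

lemma continuous_on_cinner_form: "continuous_on K (\<lambda>x::complex^'n. Re (cinner x (M *v x)))"
  unfolding cinner_def matrix_vector_mult_def
  by (intro continuous_intros continuous_on_component continuous_on_id)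

text \<open>A maximiser \<open>e\<close> of the Rayleigh quotient over \<open>S\<close>, with maximum \<open>l\<close>, makes the form of
  \<open>l I - M\<close> nonnegative on \<open>S\<close> and zero at \<open>e\<close>.\<close>
lemma herm_eigenvector_in_invariant_subspace:
  fixes M :: "complex^'n^'n"
  assumes h: "herm M" and S: "vec.subspace S" and inv: "\<forall>x\<in>S. M *v x \<in> S"
    and nontriv: "x0 \<in> S" "x0 \<noteq> 0"
  shows "\<exists>e\<in>S. norm e = 1 \<and> (\<exists>l::real. M *v e = of_real l *s e)"
proof -
  let ?f = "\<lambda>x::complex^'n. Re (cinner x (M *v x))"
  let ?n = "\<lambda>x::complex^'n. (1 / norm x) *\<^sub>R x"
  define K where "K = S \<inter> sphere 0 1"
  have "compact K" unfolding K_def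
    by (intro closed_Int_compact vec_subspace_closed S compact_sphere)
  have normalized: "?n x \<in> K" if "x \<in> S" "x \<noteq> 0" for x
  proof -
    have "?n x \<in> S" using that S by (simp add: vec.subspace_scale scaleR_eq_scalar_mult_of_real)
    then show ?thesis using that unfolding K_def by simp
  qed
  then have "K \<noteq> {}" using nontriv by blast
  then obtain e where eK: "e \<in> K" and emax: "\<forall>y\<in>K. ?f y \<le> ?f e"
    using continuous_attains_sup[OF \<open>compact K\<close> _ continuous_on_cinner_form] by blast
  define l where "l = ?f e"
  have eS: "e \<in> S" and e1: "norm e = 1" using eK unfolding K_def by auto
  have bound: "?f y \<le> l * (norm y)\<^sup>2" if "y \<in> S" for y
  proof (cases "y = 0")
    case False
    have "?f (?n y) \<le> l" using emax normalized[OF that False] unfolding l_def by blast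
    moreover have "?f (?n y) = ?f y / (norm y)\<^sup>2"
      by (simp add: scaleR_eq_scalar_mult_of_real cinner_scale_form power_divide norm_divide)
    ultimately show ?thesis using False by (simp add: divide_le_eq)
  qed simp
  define A where "A = l *\<^sub>R mat 1 - M"
  have form_A: "cinner y (A *v y) = of_real l * cinner y y - cinner y (M *v y)" for y
    unfolding A_def
    by (simp add: matrix_vector_mult_diff_rdistrib matrix_vector_mult_scaleR_left
        cinner_diff_right cinner_scale_right)
  have "A *v e = 0"
  proof (rule herm_form_zero_imp_kernel[OF _ S _ _ eS])
    show "herm A" unfolding A_def by (intro herm_diff herm_scaleR herm_mat_1 h)
    show "\<forall>y\<in>S. A *v y \<in> S" using S inv unfolding A_def
      by (simp add: matrix_vector_mult_diff_rdistrib matrix_vector_mult_scaleR_left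
          vec.subspace_diff vec.subspace_scale)
    show "\<forall>y\<in>S. 0 \<le> Re (cinner y (A *v y))" using bound by (simp add: form_A cinner_self)
    show "Re (cinner e (A *v e)) = 0" using e1 by (simp add: form_A cinner_self l_def)
  qed
  then have "M *v e = of_real l *s e"
    unfolding A_def by (simp add: matrix_vector_mult_diff_rdistrib matrix_vector_mult_scaleR_left)
  then show ?thesis using eS e1 by blast
qed

lemma herm_orthonormal_eigenbasis:
  fixes M :: "complex^'n^'n"
  assumes h: "herm M"
  shows "vec.subspace S \<Longrightarrow> \<forall>x\<in>S. M *v x \<in> S \<Longrightarrow>
    \<exists>U. finite U \<and> orthonormal_set U \<and> U \<subseteq> S \<and> vec.span U = S
      \<and> (\<forall>u\<in>U. \<exists>l::real. M *v u = of_real l *s u)"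
proof (induction "vec.dim S" arbitrary: S rule: less_induct)
  case less
  note S = less.prems(1) and inv = less.prems(2)
  show ?case
  proof (cases "S \<subseteq> {0}")
    case True
    then have "S = {0}" using S vec.subspace_0 by blast
    then show ?thesis by (intro exI[of _ "{}"]) (simp add: orthonormal_set_def)
  next
    case False
    then obtain e l where eS: "e \<in> S" and e1: "norm e = 1" and el: "M *v e = of_real l *s e"
      using herm_eigenvector_in_invariant_subspace[OF h S inv] by blast
    have ee: "cinner e e = 1" using e1 by (simp add: cinner_self)
    define S' where "S' = {x\<in>S. cinner e x = 0}"
    have S': "vec.subspace S'" using S unfolding S'_def vec.subspace_def
      by (simp add: cinner_add_right cinner_scale_right)
    have inv': "\<forall>x\<in>S'. M *v x \<in> S'"
      using inv herm_cinner[OF h, of e] el unfolding S'_def by (simp add: cinner_scale_left)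
    have "e \<notin> S'" using ee unfolding S'_def by simp
    then have "S' \<subset> S" using eS unfolding S'_def by blast
    then have "vec.dim S' < vec.dim S"
      using S S' by (intro vec.dim_psubset) (simp add: vec.span_eq_iff[THEN iffD2])
    then obtain U where U: "finite U" "orthonormal_set U" "U \<subseteq> S'" "vec.span U = S'"
      "\<forall>u\<in>U. \<exists>l::real. M *v u = of_real l *s u"
      using less.hyps[OF _ S' inv'] by blast
    have "vec.span (insert e U) = S"
    proof
      show "vec.span (insert e U) \<subseteq> S"
        using U(3) eS S unfolding S'_def by (intro vec.span_minimal) auto
      show "S \<subseteq> vec.span (insert e U)"
      proof
        fix x assume x: "x \<in> S"
        have "x - cinner e x *s e \<in> S'" unfolding S'_def using x eS S ee
          by (simp add: cinner_diff_right cinner_scale_right vec.subspace_diff vec.subspace_scale)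
        then have "x - cinner e x *s e \<in> vec.span (insert e U)"
          using U(4) vec.span_mono[of U "insert e U"] by auto
        moreover have "cinner e x *s e \<in> vec.span (insert e U)"
          by (intro vec.span_scale vec.span_base) simp
        ultimately show "x \<in> vec.span (insert e U)" using vec.span_add by fastforce
      qed
    qed
    moreover have "orthonormal_set (insert e U)"
      using U(2,3) ee unfolding S'_def by (intro orthonormal_set_insert) auto
    moreover have "insert e U \<subseteq> S" using U(3) eS unfolding S'_def by blast
    ultimately show ?thesis using U el by (intro exI[of _ "insert e U"]) auto
  qed
qed

lemma herm_eq_sum_outer_eigenbasis:
  fixes M :: "complex^'n^'n"
  assumes h: "herm M" and U: "finite U" "orthonormal_set U"
    and range: "\<forall>x. M *v x \<in> vec.span U" and eig: "\<forall>u\<in>U. M *v u = of_real (c u) *s u"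
  shows "M = (\<Sum>u\<in>U. c u *\<^sub>R outer u)"
proof (rule matrix_eq[THEN iffD2], rule allI)
  fix x
  define p where "p = (\<Sum>u\<in>U. cinner u x *s u)"
  have coeff: "cinner u p = cinner u x" if "u \<in> U" for u
  proof -
    have "cinner u p = (\<Sum>v\<in>U. cinner v x * (if u = v then 1 else 0))"
      unfolding p_def using U that
      by (simp add: cinner_sum_right cinner_scale_right orthonormal_setD)
    also have "\<dots> = cinner u x" using U(1) that by (simp add: if_distrib cong: if_cong)
    finally show ?thesis .
  qed
  have "M *v (x - p) = 0"
  proof (rule cinner_span_orthogonal_eq_0)
    show "M *v (x - p) \<in> vec.span U" using range by blast
    show "\<forall>u\<in>U. cinner u (M *v (x - p)) = 0"
      using eig coeff herm_cinner[OF h]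
      by (simp add: cinner_scale_left cinner_diff_right matrix_vector_mult_diff_distrib)
  qed
  then have "M *v x = M *v p" by (simp add: matrix_vector_mult_diff_distrib)
  also have "\<dots> = (\<Sum>u\<in>U. cinner u x *s (M *v u))"
    unfolding p_def using U(1) by (simp add: matrix_vector_mult_sum_right vector_scalar_commute)
  also have "\<dots> = (\<Sum>u\<in>U. (c u *\<^sub>R outer u) *v x)"
    using eig by (intro sum.cong refl)
      (simp add: matrix_vector_mult_scaleR_left outer_mult_vector mult.commute)
  also have "\<dots> = (\<Sum>u\<in>U. c u *\<^sub>R outer u) *v x"
    using U(1) by (simp add: matrix_vector_mult_sum_left)
  finally show "M *v x = (\<Sum>u\<in>U. c u *\<^sub>R outer u) *v x" .
qed

lemma psd_spectral_decomposition:
  fixes M :: "complex^'n^'n"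
  assumes M: "psd M" and N: "vec.subspace N" and range: "\<forall>x. M *v x \<in> N"
  shows "\<exists>U c. finite U \<and> orthonormal_set U \<and> U \<subseteq> N \<and> vec.span U = N
      \<and> (\<forall>u\<in>U. c u \<ge> 0) \<and> M = (\<Sum>u\<in>U. c u *\<^sub>R outer u)"
proof -
  have h: "herm M" using M by (rule psd_herm)
  obtain U where U: "finite U" "orthonormal_set U" "U \<subseteq> N" "vec.span U = N"
      "\<forall>u\<in>U. \<exists>l::real. M *v u = of_real l *s u"
    using herm_orthonormal_eigenbasis[OF h N] range by blast
  define c where "c u = Re (cinner u (M *v u))" for u
  have eig: "\<forall>u\<in>U. M *v u = of_real (c u) *s u"
  proof
    fix u assume u: "u \<in> U"
    then obtain l where l: "M *v u = of_real l *s u" using U(5) by blast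
    have "cinner u u = 1" using orthonormal_setD[OF U(2) u u] by simp
    then show "M *v u = of_real (c u) *s u" unfolding c_def l by (simp add: cinner_scale_right)
  qed
  have "\<forall>u\<in>U. c u \<ge> 0" using M unfolding psd_iff_cinner c_def by simp
  moreover have "M = (\<Sum>u\<in>U. c u *\<^sub>R outer u)"
    using herm_eq_sum_outer_eigenbasis[OF h U(1,2) _ eig] range U(4) by blast
  ultimately show ?thesis using U by blast
qed

lemma rank_zero: "rank (0 :: 'a::field^'n^'m) = 0"
proof -
  have "rows (0 :: 'a^'n^'m) = {0}" unfolding rows_def row_def by (auto simp: vec_eq_iff)
  then show ?thesis unfolding row_rank_def_gen by simp
qed

lemma rank_scaleR_outer:
  fixes g :: "complex^'n"
  assumes a: "a \<noteq> 0" and g: "g \<noteq> 0"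
  shows "rank (a *\<^sub>R outer g) = 1"
proof -
  let ?A = "a *\<^sub>R outer g"
  have row: "row i ?A = (of_real a * g $ i) *s vcnj g" for i
    by (simp add: vec_eq_iff row_def outer_def vcnj_def scaleR_conv_of_real[where 'a=complex])
  obtain i where gi: "g $ i \<noteq> 0" using g by (metis vec_eq_iff zero_index)
  have cg: "vcnj g \<noteq> 0" using gi by (metis vcnj_def complex_cnj_zero_iff vec_lambda_beta zero_index)
  have "vec.span (rows ?A) = vec.span {vcnj g}"
  proof (rule vec.span_eq[THEN iffD2], rule conjI)
    show "rows ?A \<subseteq> vec.span {vcnj g}"
      unfolding rows_def row by (auto intro: vec.span_scale vec.span_base)
    have "vcnj g = (1 / (of_real a * g $ i)) *s row i ?A" using a gi by (simp add: row)
    moreover have "row i ?A \<in> vec.span (rows ?A)" unfolding rows_def by (auto intro: vec.span_base)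
    ultimately show "{vcnj g} \<subseteq> vec.span (rows ?A)" by (metis vec.span_scale empty_subsetI insert_subset)
  qed
  then have "vec.dim (rows ?A) = vec.dim {vcnj g}" by (metis vec.dim_span)
  then show ?thesis unfolding row_rank_def_gen using cg by simp
qed

section \<open>Splitting off a rank-one component\<close>

lemma kernel_psd_add_outer:
  fixes Om :: "complex^'n^'n"
  assumes Om: "psd Om" and p: "p > 0"
  shows "(Om + p *\<^sub>R outer a) *v x = 0 \<longleftrightarrow> Om *v x = 0 \<and> cinner a x = 0"
proof
  have Yx: "(Om + p *\<^sub>R outer a) *v x = Om *v x + of_real p *s (cinner a x *s a)"
    by (simp add: matrix_vector_mult_add_rdistrib matrix_vector_mult_scaleR_left outer_mult_vector)
  assume "(Om + p *\<^sub>R outer a) *v x = 0"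
  then have "cinner x (Om *v x + of_real p *s (cinner a x *s a)) = 0" unfolding Yx by simp
  then have "cinner x (Om *v x) + of_real p * (cinner a x * cinner x a) = 0"
    by (simp only: cinner_add_right cinner_scale_right)
  then have "cinner x (Om *v x) + of_real (p * (cmod (cinner a x))\<^sup>2) = 0"
    by (simp add: cinner_mult_commute_norm)
  then have "Re (cinner x (Om *v x)) + p * (cmod (cinner a x))\<^sup>2 = 0"
    by (metis Re_complex_of_real plus_complex.sel(1) zero_complex.sel(1))
  moreover have "Re (cinner x (Om *v x)) \<ge> 0" using Om unfolding psd_iff_cinner by simp
  moreover have "p * (cmod (cinner a x))\<^sup>2 \<ge> 0" using p by simp
  ultimately have "Re (cinner x (Om *v x)) = 0" and "p * (cmod (cinner a x))\<^sup>2 = 0" by linarith+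
  then show "Om *v x = 0 \<and> cinner a x = 0" using psd_form_zero_imp_kernel[OF Om] p by simp
qed (simp add: matrix_vector_mult_add_rdistrib matrix_vector_mult_scaleR_left outer_mult_vector)

lemma psd_rank_one_deflation:
  fixes V :: "complex^'n^'n"
  assumes V: "psd V" and pos: "c > 0" and c: "c = Re (cinner a (V *v a))"
  defines "Vh \<equiv> (1 / c) *\<^sub>R outer (V *v a)"
    and "proj_a \<equiv> \<lambda>y. y - (cinner a (V *v y) / of_real c) *s a"
  shows "psd Vh" and "rank Vh = 1"
    and "(V - Vh) *v x = V *v proj_a x"
    and "cinner a ((V - Vh) *v x) = 0"
    and "psd (V - Vh)"
proof -
  have h: "herm V" using V by (rule psd_herm)
  have ca: "cinner a (V *v a) = of_real c" unfolding c by (rule herm_form_real[OF h])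
  show "psd Vh" unfolding Vh_def using pos by (intro psd_scaleR psd_outer) simp
  have "V *v a \<noteq> 0" using ca pos by auto
  then show "rank Vh = 1" unfolding Vh_def using pos by (intro rank_scaleR_outer) simp_all
  have deflate: "(V - Vh) *v y = V *v proj_a y" for y
  proof -
    have "Vh *v y = (cinner a (V *v y) / of_real c) *s (V *v a)"
      unfolding Vh_def herm_cinner[OF h, of a y]
      by (simp add: matrix_vector_mult_scaleR_left outer_mult_vector)
    then show ?thesis unfolding proj_a_def
      by (simp add: matrix_vector_mult_diff_rdistrib matrix_vector_mult_diff_distrib
          vector_scalar_commute)
  qed
  then show "(V - Vh) *v x = V *v proj_a x" .
  have orth: "cinner a ((V - Vh) *v y) = 0" for y
    using pos unfolding deflate proj_a_def
    by (simp add: matrix_vector_mult_diff_distrib vector_scalar_commute cinner_diff_right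
        cinner_scale_right ca)
  then show "cinner a ((V - Vh) *v x) = 0" .
  have form: "cinner y ((V - Vh) *v y) = cinner (proj_a y) (V *v proj_a y)" for y
  proof -
    have "cinner a (V *v proj_a y) = 0" using orth[of y] unfolding deflate .
    then have "cinner (proj_a y) (V *v proj_a y) = cinner y (V *v proj_a y)"
      unfolding proj_a_def by (simp add: cinner_diff_left cinner_scale_left)
    then show ?thesis unfolding deflate by simp
  qed
  show "psd (V - Vh)"
    using V \<open>psd Vh\<close> unfolding psd_iff_cinner form by (simp add: herm_diff)
qed

lemma psd_rank_one_component:
  fixes V :: "complex^'n^'n"
  assumes V: "psd V" "V \<noteq> 0" and N: "vec.subspace N" and range: "\<forall>x. V *v x \<in> N"
  shows "\<exists>Vh. psd Vh \<and> rank Vh = 1 \<and> psd (V - Vh) \<and> (\<forall>x. (V - Vh) *v x \<in> N)"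
proof -
  obtain U c where U: "finite U" "orthonormal_set U" "U \<subseteq> N"
      "\<forall>u\<in>U. c u \<ge> 0" "V = (\<Sum>u\<in>U. c u *\<^sub>R outer u)"
    using psd_spectral_decomposition[OF V(1) N range] by blast
  obtain u0 where u0: "u0 \<in> U" "c u0 > 0"
    using U(4,5) V(2) by (metis (no_types, lifting) order_le_less scaleR_eq_0_iff sum.neutral)
  define Vh where "Vh = c u0 *\<^sub>R outer u0"
  have rest: "V - Vh = (\<Sum>u\<in>U - {u0}. c u *\<^sub>R outer u)"
    unfolding U(5) Vh_def using sum.remove[OF U(1) u0(1), of "\<lambda>u. c u *\<^sub>R outer u"] by simp
  have "u0 \<noteq> 0" using orthonormal_setD[OF U(2) u0(1) u0(1)] by auto
  then have "rank Vh = 1" unfolding Vh_def using u0 by (intro rank_scaleR_outer) simp_all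
  moreover have "psd Vh" unfolding Vh_def using u0 by (intro psd_scaleR psd_outer) simp
  moreover have "psd (V - Vh)" unfolding rest using U(1,4) by (auto intro: psd_sum psd_scaleR psd_outer)
  moreover have "(V - Vh) *v x \<in> N" for x
    using range N U(3) u0(1) unfolding Vh_def
    by (simp add: matrix_vector_mult_diff_rdistrib matrix_vector_mult_scaleR_left
        outer_mult_vector vec.subspace_diff vec.subspace_scale subset_iff)
  ultimately show ?thesis by blast
qed

text \<open>If \<open>a\<^sup>H V a > 0\<close> the deflation of \<open>V\<close> along \<open>a\<close> works; otherwise \<open>V a = 0\<close>, the whole range
  of \<open>V\<close> already lies in the kernel of \<open>Y\<close>, and any spectral component can be split off.\<close>
lemma psd_rank_one_component_kernel:
  fixes V Om :: "complex^'n^'n" and a :: "complex^'n"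
  assumes V: "psd V" "V \<noteq> 0" and Om: "psd Om" "Om ** V = 0" and p: "p > 0"
  defines "N \<equiv> {x. (Om + p *\<^sub>R outer a) *v x = 0}"
  shows "\<exists>Vh. psd Vh \<and> rank Vh = 1 \<and> psd (V - Vh) \<and> (\<forall>x. (V - Vh) *v x \<in> N)"
proof -
  have N_iff: "x \<in> N \<longleftrightarrow> Om *v x = 0 \<and> cinner a x = 0" for x
    unfolding N_def using kernel_psd_add_outer[OF Om(1) p] by simp
  have OmV: "Om *v (V *v x) = 0" for x
    using Om(2) by (simp add: matrix_vector_mul_assoc)
  define c where "c = Re (cinner a (V *v a))"
  have "c \<ge> 0" using V(1) unfolding psd_iff_cinner c_def by simp
  then consider "c > 0" | "c = 0" by linarith
  then show ?thesis
  proof cases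
    case 1
    note defl = psd_rank_one_deflation[OF V(1) 1 c_def]
    have "(V - (1 / c) *\<^sub>R outer (V *v a)) *v x \<in> N" for x
      unfolding N_iff using defl(4)[of x] by (simp add: defl(3) OmV)
    then show ?thesis using defl(1,2,5) by blast
  next
    case 2
    then have "V *v a = 0" using psd_form_zero_imp_kernel[OF V(1)] unfolding c_def by simp
    then have "\<forall>x. V *v x \<in> N"
      unfolding N_iff using herm_cinner[OF psd_herm[OF V(1)], of a] by (simp add: OmV)
    moreover have "vec.subspace N" unfolding N_def by (rule vec_subspace_kernel)
    ultimately show ?thesis using psd_rank_one_component[OF V] by blast
  qed
qed

section \<open>Moving beam power into artificial noise\<close>

lemma rtr_add: "rtr A (B + C) = rtr A B + rtr A C"
  unfolding rtr_def trace_def matrix_matrix_mult_def by (simp add: distrib_left sum.distrib)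

lemma rtr_diff: "rtr A (B - C) = rtr A B - rtr A C"
  unfolding rtr_def trace_def matrix_matrix_mult_def by (simp add: right_diff_distrib sum_subtractf)

lemma rtrace_add: "rtrace (B + C) = rtrace B + rtrace C"
  unfolding rtrace_def trace_def by (simp add: sum.distrib)

lemma rtrace_diff: "rtrace (B - C) = rtrace B - rtrace C"
  unfolding rtrace_def trace_def by (simp add: sum_subtractf)

lemma rtr_gramr: "rtr (gramr h) A = Re (cinner (vcnj h) (A *v vcnj h))"
proof -
  have "trace (gramr h ** A) = (\<Sum>i\<in>UNIV. \<Sum>j\<in>UNIV. cnj (h $ i) * h $ j * A $ j $ i)"
    by (simp add: trace_def matrix_matrix_mult_def gramr_def mult.assoc)
  also have "\<dots> = (\<Sum>j\<in>UNIV. \<Sum>i\<in>UNIV. cnj (h $ i) * h $ j * A $ j $ i)"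
    by (rule sum.swap)
  also have "\<dots> = cinner (vcnj h) (A *v vcnj h)"
    by (simp add: cinner_def vcnj_def matrix_vector_mult_def sum_distrib_left algebra_simps)
  finally show ?thesis unfolding rtr_def by simp
qed

lemma psd_rtr_gramr_nonneg: "psd A \<Longrightarrow> 0 \<le> rtr (gramr h) A"
  unfolding rtr_gramr psd_iff_cinner by simp

lemma psd_mat2_mono:
  assumes "psd (mat2 a b c e)" and "e \<le> e'"
  shows "psd (mat2 a b c e')"
proof -
  have "mat2 a b c e' = mat2 a b c e + (e' - e) *\<^sub>R outer (axis 2 1)"
    unfolding mat2_def outer_def
    by (simp add: vec_eq_iff forall_2 axis_def scaleR_conv_of_real[where 'a=complex]
        flip: of_real_add of_real_diff)
  then show ?thesis using assms by (simp add: psd_add psd_scaleR psd_outer)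
qed

definition move_to_noise :: "('n::finite, 'l::finite) point \<Rightarrow> nat \<Rightarrow> complex^'l^'l \<Rightarrow> ('n, 'l) point" where
  "move_to_noise s k Vh = s\<lparr>Vk := (Vk s)(k := Vh), Lam := Lam s + (Vk s k - Vh)\<rparr>"

lemma move_to_noise_simps [simp]:
  "Vk (move_to_noise s k Vh) = (Vk s)(k := Vh)"
  "Lam (move_to_noise s k Vh) = Lam s + (Vk s k - Vh)"
  "V0 (move_to_noise s k Vh) = V0 s" "eps (move_to_noise s k Vh) = eps s"
  "beta (move_to_noise s k Vh) = beta s" "tau (move_to_noise s k Vh) = tau s"
  "theta (move_to_noise s k Vh) = theta s" "lam (move_to_noise s k Vh) = lam s"
  "gam (move_to_noise s k Vh) = gam s" "zeta (move_to_noise s k Vh) = zeta s"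
  "mu (move_to_noise s k Vh) = mu s" "om (move_to_noise s k Vh) = om s"
  unfolding move_to_noise_def by simp_all

lemma interference_move_to_noise:
  assumes K: "finite K" "k \<in> K" "i \<in> K"
  shows "(\<Sum>j\<in>K - {i}. rtr G (Vk (move_to_noise s k Vh) j)) + rtr G (Lam (move_to_noise s k Vh))
       = (\<Sum>j\<in>K - {i}. rtr G (Vk s j)) + rtr G (Lam s) + (if i = k then rtr G (Vk s k - Vh) else 0)"
proof (cases "i = k")
  case True
  then have "(\<Sum>j\<in>K - {i}. rtr G (((Vk s)(k := Vh)) j)) = (\<Sum>j\<in>K - {i}. rtr G (Vk s j))"
    by (intro sum.cong) auto
  then show ?thesis using True by (simp add: rtr_add)
next
  case False
  then have k: "k \<in> K - {i}" using K by simp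
  have "finite (K - {i})" using K by simp
  from sum.remove[OF this k, of "\<lambda>j. rtr G (((Vk s)(k := Vh)) j)"]
    sum.remove[OF this k, of "\<lambda>j. rtr G (Vk s j)"]
  show ?thesis using False by (simp add: rtr_add rtr_diff)
qed

lemma sum_rtrace_move_to_noise:
  assumes "finite K" "k \<in> K"
  shows "(\<Sum>j\<in>K. rtrace (Vk (move_to_noise s k Vh) j)) + rtrace (Lam (move_to_noise s k Vh))
       = (\<Sum>j\<in>K. rtrace (Vk s j)) + rtrace (Lam s)"
  using sum.remove[OF assms, of "\<lambda>j. rtrace (((Vk s)(k := Vh)) j)"]
    sum.remove[OF assms, of "\<lambda>j. rtrace (Vk s j)"]
  by (simp add: rtrace_add rtrace_diff)

lemma feasible_move_to_noise:
  assumes F: "feasible d s" and k: "k \<in> Kset d" and Vh: "psd Vh" and D: "psd (Vk s k - Vh)"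
    and own: "rtr (gramr (hb d k)) (Vk s k - Vh) = 0"
  shows "feasible d (move_to_noise s k Vh)"
proof -
  let ?s' = "move_to_noise s k Vh"
  have fin: "finite (Kset d)" unfolding Kset_def by simp
  have interf: "interf d ?s' i = interf d s i" if "i \<in> Kset d" for i
    using interference_move_to_noise[OF fin k that, of "gramr (hb d i)" s Vh] own
    unfolding interf_def by auto
  have einterf: "einterf d s i z \<le> einterf d ?s' i z" if "i \<in> Kset d" for i z
    using interference_move_to_noise[OF fin k that, of "gramr (he d z)" s Vh]
      psd_rtr_gramr_nonneg[OF D, of "he d z"]
    unfolding einterf_def by auto
  have signal: "rtr (gramr (hb d i)) (Vk ?s' i) = rtr (gramr (hb d i)) (Vk s i)" for i
    using own by (auto simp: rtr_diff)
  have leakage: "rtr (gramr (he d z)) (Vk ?s' i) \<le> rtr (gramr (he d z)) (Vk s i)" for i z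
    using psd_rtr_gramr_nonneg[OF D, of "he d z"] by (auto simp: rtr_diff)
  note F' = F[unfolded feasible_def]
  show ?thesis
    unfolding feasible_def
  proof (intro conjI ballI allI)
    show "(\<Sum>j\<in>Kset d. rtrace (Vk ?s' j)) + rtrace (Lam ?s') \<le> PBS d"
      using F' sum_rtrace_move_to_noise[OF fin k, of s Vh] by simp
    show "psd (Vk ?s' i)" and "herm (Vk ?s' i)" if "i \<in> Kset d" for i
      using F' that Vh by (simp_all add: psd_herm)
    show "psd (Lam ?s')" and "herm (Lam ?s')" using F' D by (simp_all add: psd_add psd_herm)
    fix i assume i: "i \<in> Kset d"
    show "psd (mat2 (tau ?s' i) (lam ?s' i) (lam ?s' i) (interf d ?s' i))"
      using F' i interf[OF i] by simp
    show "psd (mat2 (gam ?s' i z) (mu ?s' i z) (mu ?s' i z) (einterf d ?s' i z))"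
      if "z \<in> Zset d" for z
      using F' i that psd_mat2_mono[OF _ einterf[OF i, of z]] by simp
    show "rtr (gramr (he d z)) (Vk ?s' i) - gam ?s' i z * Wmm d * N0 d \<le> zeta ?s' i z"
      if "z \<in> Zset d" for z
      using F' i that leakage[of z i] by force
  qed (use F' interf signal in simp_all)
qed

theorem mainTheorem3:
  fixes d :: "('n::finite, 'l::finite) pdata"
    and s :: "('n, 'l) point"
    and z0 :: nat
    and psi1 :: real
    and psi3 psi4 psi7 psi8 :: "nat \<Rightarrow> real"
    and psi5 psi6 :: "nat \<Rightarrow> nat \<Rightarrow> real"
    and Omega :: "nat \<Rightarrow> complex^'l^'l"
    and k :: nat
  assumes data: "data_ok d"
    and z0: "z0 \<in> Zset d"
    and opt: "optimal d z0 s"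
    and nonneg1: "psi1 \<ge> 0"
    and nonneg2: "\<forall>i\<in>Kset d. psi3 i \<ge> 0 \<and> psi4 i \<ge> 0 \<and> psi7 i \<ge> 0 \<and> psi8 i \<ge> 0"
    and nonneg3: "\<forall>i\<in>Kset d. \<forall>z\<in>Zset d. psi5 z i \<ge> 0 \<and> psi6 z i \<ge> 0"
    and K2: "\<forall>i\<in>Kset d. Omega i = Ymat d psi1 psi3 psi5 psi6 psi7 psi8 i - psi4 i *\<^sub>R gramr (hb d i)"
    and K4: "\<forall>i\<in>Kset d. Omega i ** Vk s i = 0"
    and K5: "\<forall>i\<in>Kset d. psd (Omega i)"
    and k: "k \<in> Kset d"
    and psi4_pos: "psi4 k > 0"
    and rank: "rank (Vk s k) > 1"
  shows "\<exists>Vh :: complex^'l^'l. \<exists>U :: (complex^'l) set. \<exists>c :: complex^'l \<Rightarrow> real.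
           psd Vh \<and> rank Vh = 1 \<and> psd (Vk s k - Vh)
         \<and> feasible d (s\<lparr>Vk := (Vk s)(k := Vh), Lam := Lam s + (Vk s k - Vh)\<rparr>)
         \<and> (\<forall>z. obj d z (s\<lparr>Vk := (Vk s)(k := Vh), Lam := Lam s + (Vk s k - Vh)\<rparr>) = obj d z s)
         \<and> finite U \<and> orthonormal_set U
         \<and> U \<subseteq> {x. Ymat d psi1 psi3 psi5 psi6 psi7 psi8 k *v x = 0}
         \<and> vec.span U = {x. Ymat d psi1 psi3 psi5 psi6 psi7 psi8 k *v x = 0}
         \<and> (\<forall>u\<in>U. c u \<ge> 0)
         \<and> Vk s k - Vh = (\<Sum>u\<in>U. c u *\<^sub>R outer u)"
proof -
  define a where "a = vcnj (hb d k)"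
  define N where "N = {x. Ymat d psi1 psi3 psi5 psi6 psi7 psi8 k *v x = 0}"
  have F: "feasible d s" using opt unfolding optimal_def by simp
  have N: "vec.subspace N" unfolding N_def by (rule vec_subspace_kernel)
  have V: "psd (Vk s k)" using F k unfolding feasible_def by blast
  have "Vk s k \<noteq> 0" using rank by (auto simp: rank_zero)
  moreover have N_eq: "N = {x. (Omega k + psi4 k *\<^sub>R outer a) *v x = 0}"
    using K2 k unfolding N_def a_def gramr_eq_outer by simp
  ultimately obtain Vh where Vh: "psd Vh" "rank Vh = 1" "psd (Vk s k - Vh)"
      and range: "\<forall>x. (Vk s k - Vh) *v x \<in> N"
    using psd_rank_one_component_kernel[OF V _ _ _ psi4_pos] K4 K5 k by blast
  have "psd (Omega k)" using K5 k by blast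
  then have "cinner a ((Vk s k - Vh) *v a) = 0"
    using range kernel_psd_add_outer[OF _ psi4_pos] unfolding N_eq by blast
  then have "rtr (gramr (hb d k)) (Vk s k - Vh) = 0" unfolding rtr_gramr a_def by simp
  then have "feasible d (move_to_noise s k Vh)"
    using feasible_move_to_noise[OF F k Vh(1,3)] by blast
  moreover have "obj d z (move_to_noise s k Vh) = obj d z s" for z
    unfolding obj_def by simp
  moreover have "\<exists>U c. finite U \<and> orthonormal_set U \<and> U \<subseteq> N \<and> vec.span U = N
      \<and> (\<forall>u\<in>U. c u \<ge> 0) \<and> Vk s k - Vh = (\<Sum>u\<in>U. c u *\<^sub>R outer u)"
    using psd_spectral_decomposition[OF Vh(3) N range] by blast
  ultimately show ?thesis using Vh unfolding move_to_noise_def N_def by blast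
qed

end
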